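(* Let $k \ge 1$ be an integer and $t > 0$ a real number with $t \ge k-1$. Let $(n_s)_{s \ge 1}$ be a sequence of nonnegative integers with only finitely many nonzero terms, and set $N_{\mathrm{seen}} = \sum_{s \ge 1} n_s$. Define $$\widehat{N}_{\mathrm{unseen}}(t) = \sum_{s=1}^{k} h_s\, n_s, \qquad h_s = -(-t)^s\, \mathbb{P}\!\left(\mathrm{Bin}\!\left(k, \tfrac{1}{t+1}\right) \ge s\right),$$ where $\mathrm{Bin}(k,p)$ denotes a binomial random variable with $k$ trials and success probability $p$. Then $$\widehat{N}_{\mathrm{unseen}}(t) \le e^{\frac{kt}{t+1}}\, N_{\mathrm{seen}}.$$
   Context: $n_s$ is interpreted as the number of distinct items observed exactly $s$ times in a sample; $\widehat{N}_{\mathrm{unseen}}(t)$ is the smoothed Good–Turing estimator with truncation level $k$ and extrapolation factor $t$. *)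

theory Defs
  imports "HOL-Probability.Probability"
begin

definition sgt_coeff :: "nat \<Rightarrow> real \<Rightarrow> nat \<Rightarrow> real" where
  "sgt_coeff k t s = - ((- t) ^ s) *
     measure_pmf.prob (binomial_pmf k (1 / (t + 1))) {s..}"

definition N_unseen :: "nat \<Rightarrow> real \<Rightarrow> (nat \<Rightarrow> nat) \<Rightarrow> real" where
  "N_unseen k t n = (\<Sum>s=1..k. sgt_coeff k t s * real (n s))"

definition N_seen :: "(nat \<Rightarrow> nat) \<Rightarrow> nat" where
  "N_seen n = (\<Sum>s\<in>{s. 1 \<le> s \<and> n s \<noteq> 0}. n s)"

end

theory Submission imports Defs begin

text \<open>
  Each coefficient is bounded separately. For X ~ Bin(k,p) the union bound over s-subsets of the
  trials, P(X \<ge> s) \<le> E (X choose s) = (k choose s) p^s, gives with p = 1/(t+1)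
  h_s \<le> (k choose s) (t/(t+1))^s \<le> (kt/(t+1))^s / s! \<le> exp (kt/(t+1)),
  and summing against the counts n_s, s \<le> k, bounds the estimator by exp (kt/(t+1)) N_seen.
\<close>

lemma sum_binomial_choose_weighted:
  fixes p q :: "'a :: comm_ring_1"
  shows "(\<Sum>j=s..k. of_nat (k choose j) * of_nat (j choose s) * p ^ j * q ^ (k - j))
       = of_nat (k choose s) * p ^ s * (p + q) ^ (k - s)"
proof (cases "s \<le> k")
  case True
  have shifted: "of_nat (k choose (s + i)) * of_nat ((s + i) choose s) * p ^ (s + i) * q ^ (k - (s + i))
      = of_nat (k choose s) * p ^ s * (of_nat ((k - s) choose i) * p ^ i * q ^ (k - s - i))"
    if "i \<le> k - s" for i
  proof -
    have "(k choose (s + i)) * ((s + i) choose s) = (k choose s) * ((k - s) choose i)"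
      using True that choose_mult[of s "s + i" k] by simp
    then have "of_nat (k choose (s + i)) * of_nat ((s + i) choose s)
             = (of_nat (k choose s) * of_nat ((k - s) choose i) :: 'a)"
      by (metis of_nat_mult)
    moreover have "k - (s + i) = k - s - i" by simp
    ultimately show ?thesis
      by (simp add: power_add mult_ac)
  qed
  have "(\<Sum>j=s..k. of_nat (k choose j) * of_nat (j choose s) * p ^ j * q ^ (k - j))
      = (\<Sum>i\<le>k - s. of_nat (k choose s) * p ^ s * (of_nat ((k - s) choose i) * p ^ i * q ^ (k - s - i)))"
    unfolding sum.atLeastAtMost_shift_0[OF True] atLeast0AtMost
    by (intro sum.cong refl) (simp add: shifted)
  also have "\<dots> = of_nat (k choose s) * p ^ s * (p + q) ^ (k - s)"
    by (simp add: binomial_ring sum_distrib_left)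
  finally show ?thesis .
qed (simp add: binomial_eq_0)

lemma binomial_tail_sum_le:
  fixes p :: real
  assumes "0 \<le> p" "p \<le> 1"
  shows "(\<Sum>j=s..k. real (k choose j) * p ^ j * (1 - p) ^ (k - j)) \<le> real (k choose s) * p ^ s"
proof -
  have "(\<Sum>j=s..k. real (k choose j) * p ^ j * (1 - p) ^ (k - j))
      \<le> (\<Sum>j=s..k. real (k choose j) * real (j choose s) * p ^ j * (1 - p) ^ (k - j))"
  proof (rule sum_mono)
    fix j assume "j \<in> {s..k}"
    then have "1 \<le> real (j choose s)" by (simp add: Suc_leI zero_less_binomial)
    moreover have "0 \<le> real (k choose j) * p ^ j * (1 - p) ^ (k - j)" using assms by simp
    ultimately show "real (k choose j) * p ^ j * (1 - p) ^ (k - j)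
        \<le> real (k choose j) * real (j choose s) * p ^ j * (1 - p) ^ (k - j)"
      using mult_left_mono[of 1 "real (j choose s)" "real (k choose j) * p ^ j * (1 - p) ^ (k - j)"]
      by (simp add: algebra_simps)
  qed
  also have "\<dots> = real (k choose s) * p ^ s"
    by (simp add: sum_binomial_choose_weighted)
  finally show ?thesis .
qed

lemma prob_binomial_pmf_atLeast_le:
  assumes "0 \<le> p" "p \<le> 1"
  shows "measure_pmf.prob (binomial_pmf k p) {s..} \<le> real (k choose s) * p ^ s"
proof -
  have "set_pmf (binomial_pmf k p) \<subseteq> {..k}"
    using assms by (auto simp: set_pmf_binomial_eq)
  then have "{s..} \<inter> set_pmf (binomial_pmf k p) = {s..k} \<inter> set_pmf (binomial_pmf k p)"
    by auto
  then have "measure_pmf.prob (binomial_pmf k p) {s..} = measure_pmf.prob (binomial_pmf k p) {s..k}"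
    by (metis measure_Int_set_pmf)
  also have "\<dots> = (\<Sum>j=s..k. real (k choose j) * p ^ j * (1 - p) ^ (k - j))"
    using assms by (simp add: measure_measure_pmf_finite)
  also have "\<dots> \<le> real (k choose s) * p ^ s"
    using assms by (rule binomial_tail_sum_le)
  finally show ?thesis .
qed

lemma power_div_fact_le_exp:
  fixes x :: real
  assumes "0 \<le> x"
  shows "x ^ s / fact s \<le> exp x"
proof -
  have "(\<Sum>n\<in>{s}. x ^ n / fact n) \<le> (\<Sum>n. x ^ n / fact n)"
    using assms summable_exp_generic[of x]
    by (intro sum_le_suminf) (auto simp: divide_inverse ac_simps)
  then show ?thesis by (simp add: exp_def divide_inverse ac_simps)
qed

lemma binomial_le_pow_div_fact: "real (k choose s) \<le> real k ^ s / fact s"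
proof -
  have "real (k choose s) * fact s \<le> real k ^ s"
    using binomial_fact_pow[of k s] by (metis of_nat_fact of_nat_le_iff of_nat_mult of_nat_power)
  then show ?thesis by (simp add: field_simps)
qed

lemma sgt_coeff_le_exp:
  assumes "t > 0"
  shows "sgt_coeff k t s \<le> exp (real k * t / (t + 1))"
proof -
  define p where "p = 1 / (t + 1)"
  define u where "u = t / (t + 1)"
  have p: "0 \<le> p" "p \<le> 1" and "0 \<le> u"
    using assms by (auto simp: p_def u_def)
  have "- ((- t) ^ s) \<le> t ^ s"
    using assms by (metis abs_ge_minus_self abs_of_pos power_abs abs_minus_cancel)
  then have "sgt_coeff k t s \<le> t ^ s * measure_pmf.prob (binomial_pmf k p) {s..}"
    unfolding sgt_coeff_def p_def[symmetric] by (intro mult_right_mono) auto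
  also have "\<dots> \<le> t ^ s * (real (k choose s) * p ^ s)"
    using prob_binomial_pmf_atLeast_le[OF p] assms by (intro mult_left_mono) auto
  also have "\<dots> = real (k choose s) * u ^ s"
    by (simp add: p_def u_def power_divide)
  also have "\<dots> \<le> real k ^ s / fact s * u ^ s"
    using \<open>0 \<le> u\<close> by (intro mult_right_mono binomial_le_pow_div_fact) auto
  also have "\<dots> = (real k * u) ^ s / fact s"
    by (simp add: power_mult_distrib)
  also have "\<dots> \<le> exp (real k * u)"
    using \<open>0 \<le> u\<close> by (intro power_div_fact_le_exp) simp
  finally show ?thesis by (simp add: u_def)
qed

lemma sum_counts_le_N_seen:
  assumes "finite {s. 1 \<le> s \<and> n s \<noteq> 0}"
  shows "(\<Sum>s=1..k. n s) \<le> N_seen n"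
proof -
  have "(\<Sum>s=1..k. n s) = (\<Sum>s\<in>{1..k} \<inter> {s. 1 \<le> s \<and> n s \<noteq> 0}. n s)"
    by (rule sum.mono_neutral_right) auto
  also have "\<dots> \<le> N_seen n"
    unfolding N_seen_def using assms by (intro sum_mono2) auto
  finally show ?thesis .
qed

theorem theorem1:
  fixes k :: nat and t :: real and n :: "nat \<Rightarrow> nat"
  assumes "k \<ge> 1" and "t > 0" and "t \<ge> real k - 1"
    and "finite {s. 1 \<le> s \<and> n s \<noteq> 0}"
  shows "N_unseen k t n \<le> exp (real k * t / (t + 1)) * real (N_seen n)"
proof -
  let ?E = "exp (real k * t / (t + 1))"
  have "N_unseen k t n \<le> (\<Sum>s=1..k. ?E * real (n s))"
    unfolding N_unseen_def
    using sgt_coeff_le_exp[OF \<open>t > 0\<close>] by (intro sum_mono mult_right_mono) auto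
  also have "\<dots> = ?E * real (\<Sum>s=1..k. n s)"
    by (simp add: sum_distrib_left)
  also have "\<dots> \<le> ?E * real (N_seen n)"
    by (intro mult_left_mono of_nat_mono sum_counts_le_N_seen[OF assms(4)]) simp
  finally show ?thesis .
qed

end
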